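(* For every positive integer $n$, \[u(n,n+2)=\varepsilon(n,n+2)=\left\lfloor\frac{2n+4}{3}\right\rfloor.\]
   Context: All matrices are binary. For a nonempty set $S$ of columns of a binary matrix, let $z$ be the sum over the integers of the columns in $S$. $S$ is called $1$-free if no entry of $z$ equals $1$, and even if all entries of $z$ are even. For a binary $m\times n$ matrix $A$ with $m<n$: $\varepsilon(A)$ is the smallest cardinality of a nonempty even set of columns, and $u(A)$ the smallest cardinality of a nonempty $1$-free set of columns. For $m<n$, $\varepsilon(m,n)$ and $u(m,n)$ are the maxima of $\varepsilon(A)$, resp. $u(A)$, over all binary $m\times n$ matrices. *)

theory Defs
  imports Main
begin

text \<open>A binary m x n matrix is represented by A :: nat => nat => bool, entry (i,j) being
  of_bool (A i j) for i < m, j < n (entries outside this range are irrelevant).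
  Columns are indexed by j < n.\<close>

definition colsum :: "(nat \<Rightarrow> nat \<Rightarrow> bool) \<Rightarrow> nat set \<Rightarrow> nat \<Rightarrow> nat" where
  "colsum A S i = (\<Sum>j\<in>S. of_bool (A i j))"

definition even_set :: "nat \<Rightarrow> nat \<Rightarrow> (nat \<Rightarrow> nat \<Rightarrow> bool) \<Rightarrow> nat set \<Rightarrow> bool" where
  "even_set m n A S \<longleftrightarrow> S \<noteq> {} \<and> S \<subseteq> {..<n} \<and> (\<forall>i<m. even (colsum A S i))"

definition one_free :: "nat \<Rightarrow> nat \<Rightarrow> (nat \<Rightarrow> nat \<Rightarrow> bool) \<Rightarrow> nat set \<Rightarrow> bool" where
  "one_free m n A S \<longleftrightarrow> S \<noteq> {} \<and> S \<subseteq> {..<n} \<and> (\<forall>i<m. colsum A S i \<noteq> 1)"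

definition eps_mat :: "nat \<Rightarrow> nat \<Rightarrow> (nat \<Rightarrow> nat \<Rightarrow> bool) \<Rightarrow> nat" where
  "eps_mat m n A = (LEAST k. \<exists>S. even_set m n A S \<and> card S = k)"

definition u_mat :: "nat \<Rightarrow> nat \<Rightarrow> (nat \<Rightarrow> nat \<Rightarrow> bool) \<Rightarrow> nat" where
  "u_mat m n A = (LEAST k. \<exists>S. one_free m n A S \<and> card S = k)"

definition eps_num :: "nat \<Rightarrow> nat \<Rightarrow> nat" where
  "eps_num m n = Max {eps_mat m n A | A. True}"

definition u_num :: "nat \<Rightarrow> nat \<Rightarrow> nat" where
  "u_num m n = Max {u_mat m n A | A. True}"

end

theory Submission
  imports Defs
begin

(*
  Upper bound: the parity vectors of the 2^(n+2) column sets take at most 2^n values, so three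
  distinct column sets share one. Their pairwise symmetric differences are even sets, and each
  column lies in at most two of them, so one of them has at most 2(n+2)/3 columns. Even sets
  are 1-free, hence u <= eps.

  Lower bound: take the matrix whose row i < n-1 has ones exactly in columns i and i+3 and whose
  last row has ones exactly in columns 0, 1, 2. A 1-free set contains column j iff it contains
  column j+3, so it is a union of residue classes mod 3 within {0..n+1}, and the last row forces
  at least two of the three classes. Such a set has at least (n+2) - ceil((n+2)/3) columns.
*)

lemma pigeonhole_three:
  assumes "finite B" and "f ` X \<subseteq> B" and "2 * card B < card X"
  obtains a b c where "a \<in> X" "b \<in> X" "c \<in> X" "a \<noteq> b" "a \<noteq> c" "b \<noteq> c"
    and "f a = f b" "f b = f c"
proof -
  have "finite X"
    using assms(3) card.infinite by fastforce
  have "\<not> (\<forall>y\<in>B. card {x\<in>X. f x = y} \<le> 2)"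
  proof
    assume fibres: "\<forall>y\<in>B. card {x\<in>X. f x = y} \<le> 2"
    have "card X \<le> card (\<Union>y\<in>B. {x\<in>X. f x = y})"
      using assms(1,2) \<open>finite X\<close> by (intro card_mono) auto
    also have "\<dots> \<le> (\<Sum>y\<in>B. card {x\<in>X. f x = y})"
      using assms(1) by (rule card_UN_le)
    also have "\<dots> \<le> 2 * card B"
      using sum_mono[of B _ "\<lambda>_. 2"] fibres by fastforce
    finally show False
      using assms(3) by simp
  qed
  then obtain y where "2 < card {x\<in>X. f x = y}"
    using not_le by blast
  then obtain T where "T \<subseteq> {x\<in>X. f x = y}" "card T = 3"
    using obtain_subset_with_card_n[of 3 "{x\<in>X. f x = y}"] by force
  then show thesis
    using that unfolding card_3_iff by fastforce
qed

lemma card_sym_diffs_le: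
  assumes "finite U" "X \<subseteq> U" "Y \<subseteq> U" "Z \<subseteq> U"
  shows "card (sym_diff X Y) + card (sym_diff X Z) + card (sym_diff Y Z) \<le> 2 * card U"
proof -
  have card_eq: "card S = (\<Sum>x\<in>U. of_bool (x \<in> S))" if "S \<subseteq> U" for S
    using assms(1) that by (simp add: Int_absorb1)
  have "card (sym_diff X Y) + card (sym_diff X Z) + card (sym_diff Y Z)
      = (\<Sum>x\<in>U. of_bool (x \<in> sym_diff X Y) + of_bool (x \<in> sym_diff X Z)
                    + of_bool (x \<in> sym_diff Y Z))"
    unfolding sum.distrib using assms(2-4) by (subst (1 2 3) card_eq) auto
  also have "\<dots> \<le> (\<Sum>x\<in>U. 2)"
    by (intro sum_mono) auto
  finally show ?thesis
    by simp
qed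

lemma card_residue_class_le:
  fixes N t :: nat
  shows "card {x. x < N \<and> x mod 3 = t} \<le> (N + 2) div 3"
proof -
  have "{x. x < N \<and> x mod 3 = t} \<subseteq> (\<lambda>k. 3 * k + t) ` {..<(N + 2) div 3}"
  proof
    fix x assume "x \<in> {x. x < N \<and> x mod 3 = t}"
    then have "x = 3 * (x div 3) + t" "x div 3 < (N + 2) div 3"
      by auto
    then show "x \<in> (\<lambda>k. 3 * k + t) ` {..<(N + 2) div 3}"
      by blast
  qed
  then have "card {x. x < N \<and> x mod 3 = t} \<le> card ((\<lambda>k. 3 * k + t) ` {..<(N + 2) div 3})"
    by (intro card_mono) auto
  also have "\<dots> \<le> (N + 2) div 3"
    using card_image_le[of "{..<(N + 2) div 3}" "\<lambda>k. 3 * k + t"] by simp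
  finally show ?thesis .
qed

lemma Max_range_eqI:
  fixes f :: "'a \<Rightarrow> nat"
  assumes "\<And>x. f x \<le> d" and "d \<le> f a"
  shows "Max {f x | x. True} = d"
proof (rule Max_eqI)
  have bounded: "{f x | x. True} \<subseteq> {..d}"
    using assms(1) by blast
  then show "finite {f x | x. True}"
    by (rule finite_subset) simp
  show "y \<le> d" if "y \<in> {f x | x. True}" for y
    using bounded that by blast
  have "f a = d"
    using antisym[OF assms(1) assms(2)] .
  then show "d \<in> {f x | x. True}"
    by blast
qed

lemma colsum_sym_diff:
  assumes "finite X" "finite Y"
  shows "colsum A (sym_diff X Y) i + 2 * colsum A (X \<inter> Y) i = colsum A X i + colsum A Y i"
proof -
  let ?g = "\<lambda>j. of_bool (A i j) :: nat"
  have "sum ?g (sym_diff X Y) = sum ?g (X - Y) + sum ?g (Y - X)"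
    using assms by (intro sum.union_disjoint) auto
  moreover have "sum ?g X = sum ?g (X \<inter> Y) + sum ?g (X - Y)"
    using assms(1) by (rule sum.Int_Diff)
  moreover have "sum ?g Y = sum ?g (X \<inter> Y) + sum ?g (Y - X)"
    using sum.Int_Diff[OF assms(2), of ?g X] by (simp add: Int_commute)
  ultimately show ?thesis
    unfolding colsum_def by simp
qed

lemma even_colsum_sym_diff:
  assumes "finite X" "finite Y"
  shows "even (colsum A (sym_diff X Y) i) \<longleftrightarrow> (even (colsum A X i) \<longleftrightarrow> even (colsum A Y i))"
  using colsum_sym_diff[OF assms, of A i] by (metis even_add even_mult_iff even_numeral)

lemma even_set_sym_diff:
  assumes "X \<subseteq> {..<n}" "Y \<subseteq> {..<n}" "X \<noteq> Y"
    and "\<And>i. i < m \<Longrightarrow> even (colsum A X i) \<longleftrightarrow> even (colsum A Y i)"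
  shows "even_set m n A (sym_diff X Y)"
proof -
  have "finite X" "finite Y"
    using assms(1,2) finite_subset by blast+
  then show ?thesis
    using assms unfolding even_set_def by (auto simp: even_colsum_sym_diff)
qed

lemma colsum_eq_card:
  assumes "finite S"
  shows "colsum A S i = card (S \<inter> {j. A i j})"
  unfolding colsum_def using assms by simp

lemma one_free_row_card:
  assumes "one_free m n A S" "i < m"
  shows "card (S \<inter> {j. A i j}) \<noteq> 1"
proof -
  have "finite S"
    using assms(1) finite_subset unfolding one_free_def by blast
  then show ?thesis
    using assms unfolding one_free_def by (metis colsum_eq_card)
qed

lemma even_set_imp_one_free: "even_set m n A S \<Longrightarrow> one_free m n A S"
  unfolding even_set_def one_free_def by (metis odd_one)

lemma eps_mat_le_card: "even_set m n A E \<Longrightarrow> eps_mat m n A \<le> card E"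
  unfolding eps_mat_def by (intro Least_le) blast

lemma u_mat_le_eps_mat:
  assumes "even_set m n A E"
  shows "u_mat m n A \<le> eps_mat m n A"
proof -
  obtain E' where "even_set m n A E'" and "card E' = eps_mat m n A"
    using LeastI_ex[of "\<lambda>k. \<exists>S. even_set m n A S \<and> card S = k"] assms
    unfolding eps_mat_def by blast
  then show ?thesis
    unfolding u_mat_def by (intro Least_le) (blast intro: even_set_imp_one_free)
qed

lemma le_u_mat:
  assumes "one_free m n A S" and "\<And>S. one_free m n A S \<Longrightarrow> k \<le> card S"
  shows "k \<le> u_mat m n A"
  unfolding u_mat_def
proof (rule LeastI2_ex)
  show "\<exists>j S. one_free m n A S \<and> card S = j"
    using assms(1) by blast
next
  fix j assume "\<exists>S. one_free m n A S \<and> card S = j"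
  then show "k \<le> j"
    using assms(2) by blast
qed

lemma exists_small_even_set:
  assumes "m + 2 \<le> n"
  obtains E where "even_set m n A E" and "3 * card E \<le> 2 * n"
proof -
  define parity where "parity S = {i. i < m \<and> odd (colsum A S i)}" for S
  have "2 * 2 ^ m < (2::nat) ^ n"
    using assms power_strict_increasing[of "m + 1" n "2::nat"] by simp
  then have card: "2 * card (Pow {..<m}) < card (Pow {..<n})"
    by (simp add: card_Pow)
  have image: "parity ` Pow {..<n} \<subseteq> Pow {..<m}"
    by (auto simp: parity_def)
  obtain X Y Z where "X \<in> Pow {..<n}" "Y \<in> Pow {..<n}" "Z \<in> Pow {..<n}"
    and "X \<noteq> Y" "X \<noteq> Z" "Y \<noteq> Z" and "parity X = parity Y" "parity Y = parity Z"
    by (rule pigeonhole_three[OF _ image card]) simp_all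
  moreover from this have XYZ: "X \<subseteq> {..<n}" "Y \<subseteq> {..<n}" "Z \<subseteq> {..<n}"
    by simp_all
  moreover have same_parity: "even (colsum A S i) \<longleftrightarrow> even (colsum A T i)"
    if "parity S = parity T" "i < m" for S T i
    using that unfolding parity_def set_eq_iff by blast
  ultimately have even: "even_set m n A (sym_diff X Y)" "even_set m n A (sym_diff X Z)"
    "even_set m n A (sym_diff Y Z)"
    by (auto intro!: even_set_sym_diff same_parity)
  have "card (sym_diff X Y) + card (sym_diff X Z) + card (sym_diff Y Z) \<le> 2 * n"
    using card_sym_diffs_le[OF _ XYZ] by simp
  then consider "3 * card (sym_diff X Y) \<le> 2 * n" | "3 * card (sym_diff X Z) \<le> 2 * n"
    | "3 * card (sym_diff Y Z) \<le> 2 * n"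
    by linarith
  then show thesis
    using that even by cases
qed

lemma eps_mat_le:
  assumes "m + 2 \<le> n"
  shows "3 * eps_mat m n A \<le> 2 * n"
proof -
  obtain E where "even_set m n A E" and "3 * card E \<le> 2 * n"
    using exists_small_even_set[OF assms] .
  then show ?thesis
    using eps_mat_le_card[of m n A E] by linarith
qed

definition extremal_matrix :: "nat \<Rightarrow> nat \<Rightarrow> nat \<Rightarrow> bool" where
  "extremal_matrix n i j \<longleftrightarrow> (i + 1 < n \<and> (j = i \<or> j = i + 3)) \<or> (i + 1 = n \<and> j < 3)"

lemma one_free_extremal_matrix_mod3:
  assumes "one_free n (n + 2) (extremal_matrix n) S" "j < n + 2"
  shows "j \<in> S \<longleftrightarrow> j mod 3 \<in> S"
  using assms(2)
proof (induction j rule: less_induct)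
  case (less j)
  show ?case
  proof (cases "j < 3")
    case False
    then obtain i where j: "j = i + 3"
      by (metis add.commute le_add_diff_inverse not_less)
    have "{k. extremal_matrix n i k} = {i, i + 3}"
      using less.prems j unfolding extremal_matrix_def by auto
    then have "card (S \<inter> {i, i + 3}) \<noteq> 1"
      using one_free_row_card[OF assms(1), of i] less.prems j by simp
    then have "i \<in> S \<longleftrightarrow> j \<in> S"
      using j by (cases "i \<in> S"; cases "i + 3 \<in> S") auto
    then show ?thesis
      using less.IH[of i] less.prems j by simp
  qed simp
qed

lemma one_free_extremal_matrix_residues:
  assumes "n > 0" and "one_free n (n + 2) (extremal_matrix n) S"
  obtains t where "{..<3} - S \<subseteq> {t}"
proof -
  have "{k. extremal_matrix n (n - 1) k} = {..<3}"
    using assms(1) unfolding extremal_matrix_def by auto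
  then have last_row: "card (S \<inter> {..<3}) \<noteq> 1"
    using one_free_row_card[OF assms(2), of "n - 1"] assms(1) by simp
  obtain j where "j \<in> S" "j < n + 2"
    using assms(2) unfolding one_free_def by blast
  then have "j mod 3 \<in> S"
    using one_free_extremal_matrix_mod3[OF assms(2)] by blast
  then have "S \<inter> {..<3} \<noteq> {}"
    by (metis IntI lessThan_iff mod_less_divisor zero_less_numeral empty_iff)
  then have "card (S \<inter> {..<3}) \<noteq> 0"
    by simp
  moreover have "card (S \<inter> {..<3}) \<le> 3"
    using card_mono[of "{..<3}" "S \<inter> {..<3}"] by simp
  moreover have "card ({..<3} - S) = 3 - card (S \<inter> {..<3})"
    using card_Diff_subset_Int[of "{..<3}" S] by (simp add: Int_commute)
  ultimately have "card ({..<3} - S) \<le> 1"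
    using last_row by linarith
  then have single: "a = b" if "a \<in> {..<3} - S" "b \<in> {..<3} - S" for a b
    using card_le_Suc0_iff_eq[of "{..<3} - S"] that by simp
  show thesis
  proof (cases "{..<3} - S = {}")
    case True
    then show thesis
      using that[of 0] by blast
  next
    case False
    then obtain t where "t \<in> {..<3} - S"
      by blast
    then show thesis
      using that[of t] single by blast
  qed
qed

lemma card_one_free_extremal_matrix:
  assumes "n > 0" and one_free: "one_free n (n + 2) (extremal_matrix n) S"
  shows "(2 * n + 4) div 3 \<le> card S"
proof -
  obtain t where residues: "{..<3} - S \<subseteq> {t}"
    by (rule one_free_extremal_matrix_residues[OF assms])
  have S: "S \<subseteq> {..<n + 2}"
    using one_free unfolding one_free_def by blast
  have "{..<n + 2} - S \<subseteq> {x. x < n + 2 \<and> x mod 3 = t}"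
  proof
    fix x assume x: "x \<in> {..<n + 2} - S"
    then have "x mod 3 \<notin> S"
      using one_free_extremal_matrix_mod3[OF one_free, of x] by blast
    then have "x mod 3 \<in> {..<3} - S"
      by simp
    then show "x \<in> {x. x < n + 2 \<and> x mod 3 = t}"
      using residues x by blast
  qed
  then have "card ({..<n + 2} - S) \<le> card {x. x < n + 2 \<and> x mod 3 = t}"
    by (intro card_mono) auto
  also have "\<dots> \<le> (n + 4) div 3"
    using card_residue_class_le[of "n + 2" t] by simp
  finally have "card ({..<n + 2} - S) \<le> (n + 4) div 3" .
  moreover have "card ({..<n + 2} - S) = n + 2 - card S"
    using card_Diff_subset[OF finite_subset[OF S] S] by simp
  ultimately show ?thesis
    by linarith
qed

theorem theorem7p1:
  fixes n :: nat
  assumes "n > 0"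
  shows "u_num n (n + 2) = eps_num n (n + 2) \<and> eps_num n (n + 2) = (2 * n + 4) div 3"
proof -
  have eps_le: "eps_mat n (n + 2) A \<le> (2 * n + 4) div 3" for A
    using eps_mat_le[of n "n + 2" A] by simp
  have even_set: "\<exists>E. even_set n (n + 2) A E" for A
    using exists_small_even_set[of n "n + 2" A, OF order_refl] by blast
  have u_le_eps: "u_mat n (n + 2) A \<le> eps_mat n (n + 2) A" for A
    using even_set[of A] u_mat_le_eps_mat by blast
  obtain E where "even_set n (n + 2) (extremal_matrix n) E"
    using even_set by blast
  then have lower: "(2 * n + 4) div 3 \<le> u_mat n (n + 2) (extremal_matrix n)"
    by (rule le_u_mat[OF even_set_imp_one_free]) (rule card_one_free_extremal_matrix[OF assms])
  have "eps_num n (n + 2) = (2 * n + 4) div 3"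
    unfolding eps_num_def
    by (rule Max_range_eqI[where f = "eps_mat n (n + 2)",
          OF eps_le order_trans[OF lower u_le_eps]])
  moreover have "u_num n (n + 2) = (2 * n + 4) div 3"
    unfolding u_num_def
    by (rule Max_range_eqI[where f = "u_mat n (n + 2)",
          OF order_trans[OF u_le_eps eps_le] lower])
  ultimately show ?thesis
    by simp
qed

end
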